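(* Let $K\in\{\mathbb{Q}_2(\sqrt{-1}),\mathbb{Q}_2(\sqrt{-5})\}$, $d=2m$ with $m$ odd, $m\ge3$, and $f=a_1x_1^d+\dots+a_sx_s^d$ with all $a_i\in\mathcal{O}\setminus\{0\}$. Suppose that for some level $k$, $f$ has at least three variables at level $k$ all with the same $\pi$-coefficient, and at least one variable at level $k+4$. Then $f$ has a nontrivial zero in $K$.
   Context: $\mathcal{O}$ is the ring of integers of $K$ and $\pi$ the uniformizer: $\pi=1+\sqrt{-1}$ for $\mathbb{Q}_2(\sqrt{-1})$ and $\pi=1+\sqrt{-5}$ for $\mathbb{Q}_2(\sqrt{-5})$. Each unit $u$ has a unique expansion $u=c_0+c_1\pi+c_2\pi^2+\cdots$ with $c_j\in\{0,1\}$, $c_0=1$. Writing $a_i=\pi^r u$ with $u$ a unit, the variable $x_i$ is at level $r\bmod d$ (levels are residues modulo $d$), and its $\pi$-coefficient is $c_1$ of $u$. A nontrivial zero is a point of $K^s$, not all coordinates zero, where $f$ vanishes. *)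

theory Defs
  imports Main
begin

text \<open>Z[alpha] with alpha^2 = -D is represented by pairs (a,b) = a + b*alpha.
  The ring of integers O = Z_2[alpha] (true for D = 1, 5 since -D = 3 mod 4) is the
  inverse limit of Z[alpha]/2^n Z[alpha]: an element is a sequence x :: nat => int*int
  with x (Suc n) = x n modulo 2^n (componentwise); two elements are equal iff they
  agree modulo 2^n for every n.  K = Frac(O) = O[1/2] is represented by pairs (o,e)
  standing for o / 2^e.\<close>

type_synonym zalpha = "int \<times> int"

definition zmul :: "int \<Rightarrow> zalpha \<Rightarrow> zalpha \<Rightarrow> zalpha" where
  "zmul D u v = (fst u * fst v - D * snd u * snd v, fst u * snd v + snd u * fst v)"

definition zadd :: "zalpha \<Rightarrow> zalpha \<Rightarrow> zalpha" where
  "zadd u v = (fst u + fst v, snd u + snd v)"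

definition zsub :: "zalpha \<Rightarrow> zalpha \<Rightarrow> zalpha" where
  "zsub u v = (fst u - fst v, snd u - snd v)"

fun zpow :: "int \<Rightarrow> zalpha \<Rightarrow> nat \<Rightarrow> zalpha" where
  "zpow D u 0 = (1, 0)"
| "zpow D u (Suc k) = zmul D u (zpow D u k)"

definition zcong :: "nat \<Rightarrow> zalpha \<Rightarrow> zalpha \<Rightarrow> bool" where
  "zcong n u v \<longleftrightarrow> (2::int)^n dvd (fst u - fst v) \<and> (2::int)^n dvd (snd u - snd v)"

type_synonym Oelt = "nat \<Rightarrow> zalpha"

definition in_O :: "Oelt \<Rightarrow> bool" where
  "in_O x \<longleftrightarrow> (\<forall>n. zcong n (x (Suc n)) (x n))"

definition O_eq :: "Oelt \<Rightarrow> Oelt \<Rightarrow> bool" where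
  "O_eq x y \<longleftrightarrow> (\<forall>n. zcong n (x n) (y n))"

definition O_of :: "zalpha \<Rightarrow> Oelt" where
  "O_of c = (\<lambda>n. c)"

definition O_zero :: Oelt where "O_zero = O_of (0, 0)"
definition O_one :: Oelt where "O_one = O_of (1, 0)"
definition O_two :: Oelt where "O_two = O_of (2, 0)"

text \<open>The uniformizer pi = 1 + alpha.\<close>
definition O_pi :: Oelt where "O_pi = O_of (1, 1)"

definition O_add :: "Oelt \<Rightarrow> Oelt \<Rightarrow> Oelt" where
  "O_add x y = (\<lambda>n. zadd (x n) (y n))"

definition O_sub :: "Oelt \<Rightarrow> Oelt \<Rightarrow> Oelt" where
  "O_sub x y = (\<lambda>n. zsub (x n) (y n))"

definition O_mul :: "int \<Rightarrow> Oelt \<Rightarrow> Oelt \<Rightarrow> Oelt" where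
  "O_mul D x y = (\<lambda>n. zmul D (x n) (y n))"

definition O_pow :: "int \<Rightarrow> Oelt \<Rightarrow> nat \<Rightarrow> Oelt" where
  "O_pow D x k = (\<lambda>n. zpow D (x n) k)"

type_synonym Kelt = "Oelt \<times> nat"

definition K_of_O :: "Oelt \<Rightarrow> Kelt" where "K_of_O x = (x, 0)"
definition K_zero :: Kelt where "K_zero = (O_zero, 0)"

definition K_add :: "int \<Rightarrow> Kelt \<Rightarrow> Kelt \<Rightarrow> Kelt" where
  "K_add D p q = (O_add (O_mul D (fst p) (O_pow D O_two (snd q)))
                        (O_mul D (fst q) (O_pow D O_two (snd p))), snd p + snd q)"

definition K_mul :: "int \<Rightarrow> Kelt \<Rightarrow> Kelt \<Rightarrow> Kelt" where
  "K_mul D p q = (O_mul D (fst p) (fst q), snd p + snd q)"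

definition K_pow :: "int \<Rightarrow> Kelt \<Rightarrow> nat \<Rightarrow> Kelt" where
  "K_pow D p k = (O_pow D (fst p) k, snd p * k)"

definition K_eq :: "int \<Rightarrow> Kelt \<Rightarrow> Kelt \<Rightarrow> bool" where
  "K_eq D p q \<longleftrightarrow> O_eq (O_mul D (fst p) (O_pow D O_two (snd q)))
                        (O_mul D (fst q) (O_pow D O_two (snd p)))"

definition diag_form :: "int \<Rightarrow> nat \<Rightarrow> (nat \<Rightarrow> Oelt) \<Rightarrow> nat \<Rightarrow> (nat \<Rightarrow> Kelt) \<Rightarrow> Kelt" where
  "diag_form D d a s x =
     foldr (\<lambda>i acc. K_add D (K_mul D (K_of_O (a i)) (K_pow D (x i) d)) acc) [0..<s] K_zero"

text \<open>The coefficient a (nonzero in O) is at level k (mod d) with pi-coefficient c: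
  a = pi^r * u with r = k mod d and u = 1 + c*pi (mod pi^2), c in {0,1}
  (such u is a unit with expansion coefficients c_0 = 1, c_1 = c).\<close>
definition level_coeff :: "int \<Rightarrow> nat \<Rightarrow> Oelt \<Rightarrow> nat \<Rightarrow> int \<Rightarrow> bool" where
  "level_coeff D d a k c \<longleftrightarrow> c \<in> {0, 1} \<and>
     (\<exists>r u w. in_O u \<and> in_O w \<and> r mod d = k mod d \<and>
        O_eq a (O_mul D (O_pow D O_pi r) u) \<and>
        O_eq (O_sub u (O_add O_one (O_mul D (O_of (c, 0)) O_pi))) (O_mul D (O_pow D O_pi 2) w))"

definition at_level :: "int \<Rightarrow> nat \<Rightarrow> Oelt \<Rightarrow> nat \<Rightarrow> bool" where
  "at_level D d a k \<longleftrightarrow> (\<exists>c. level_coeff D d a k c)"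

end

(*
  Write each coefficient as a_i = pi^r_i u_i with u_i a unit. Among three units at the same level
  with the same pi-coefficient, pigeonholing the next binary digit gives two, u_P and u_Q, whose
  quotient u_Q / u_P is congruent to a rational integer modulo 4. Taking x_P = pi^t_P y,
  x_Q = pi^t_Q and x_j = pi^t_j W for the coefficient at level k + 4, with the exponents chosen so
  that every term is divisible by exactly pi^N, the form reduces to u_P y^2m + u_Q + pi^4 u_j W = 0
  with W in {0, 1}. Modulo 8 this is solved by a finite search: the units y used satisfy
  y^4 = 1 (mod 8), hence y^2m = y^2, and their squares cover every residue p + 4 q alpha with p odd
  once the optional term pi^4 u_j W = -4 u_j W (mod 8) is added. Since d = 2m with m odd, the
  derivative 2m u_P y^(2m-1) is exactly divisible by 2, so Hensel's lemma lifts the solution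
  modulo 8 to a zero in K.
*)
theory Submission
  imports Defs Complex_Main
begin

lemma two_power_pred: "j \<ge> 1 \<Longrightarrow> 2 * 2 ^ (j - 1) = (2::'a::semiring_1) ^ j"
  by (metis One_nat_def Suc_pred less_eq_Suc_le power_Suc)

lemma two_power_pred_square:
  "j \<ge> 3 \<Longrightarrow> ((2::'a::semiring_1) ^ (j - 1))\<^sup>2 = 2 ^ (j + 1) * 2 ^ (j - 3)"
proof -
  assume "j \<ge> 3"
  then have "(j - 1) * 2 = (j + 1) + (j - 3)"
    by simp
  then show ?thesis
    by (metis power_add power_mult)
qed

lemma sum_lessThan_three:
  fixes s :: nat
  assumes "P < s" "Q < s" "j < s" "P \<noteq> Q" "j \<noteq> P" "j \<noteq> Q" "\<forall>i<s. i \<notin> {P, Q, j} \<longrightarrow> f i = 0"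
  shows "(\<Sum>i<s. f i) = f P + f Q + f j"
proof -
  have "(\<Sum>i<s. f i) = (\<Sum>i\<in>{P, Q, j}. f i)"
    using assms by (intro sum.mono_neutral_right) auto
  also have "\<dots> = f P + f Q + f j"
    using assms(4-6) by (simp add: add.assoc)
  finally show ?thesis .
qed

lemma exponents_align:
  fixes d rP rQ r4 k :: nat
  assumes "d > 0" "rP mod d = k mod d" "rQ mod d = k mod d" "r4 mod d = (k + 4) mod d"
  obtains N tP tQ t4 where "d * tP + rP = N" "d * tQ + rQ = N" "d * t4 + r4 = N + 4"
proof -
  define N where "N = rP + d * (rQ + r4)"
  have "rQ \<le> d * rQ" "r4 \<le> d * r4"
    using assms(1) by simp_all
  then have "rQ \<le> N" "r4 \<le> N + 4"
    unfolding N_def distrib_left by linarith+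
  moreover have "N mod d = rQ mod d"
    using assms(2,3) by (simp add: N_def)
  moreover have "(N + 4) mod d = r4 mod d"
  proof -
    have "N + 4 = (rP + 4) + d * (rQ + r4)"
      by (simp add: N_def)
    then have "(N + 4) mod d = (rP + 4) mod d"
      by (simp only: mod_mult_self2)
    also have "\<dots> = (k + 4) mod d"
      using assms(2) by (metis mod_add_left_eq)
    finally show ?thesis
      using assms(4) by simp
  qed
  ultimately obtain tQ t4 where "N = rQ + d * tQ" "N + 4 = r4 + d * t4"
    by (metis mod_eq_nat1E)
  then have "d * (rQ + r4) + rP = N" "d * tQ + rQ = N" "d * t4 + r4 = N + 4"
    by (simp_all add: N_def)
  then show ?thesis
    by (rule that)
qed

text \<open>For p = a + b alpha and q = a' + b' alpha, the alpha-coordinate of q cnj(p) is det2 p q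
  (see emb_mult_cnj), so 4 dvd det2 p q says that q / p is a rational integer modulo 4.\<close>

definition det2 :: "zalpha \<Rightarrow> zalpha \<Rightarrow> int" where
  "det2 p q = fst p * snd q - fst q * snd p"

lemma det2_cong_mod4:
  assumes "c \<in> {0, 1}" "zcong 1 p (1 + c, c)" "zcong 1 q (1 + c, c)"
  shows "4 dvd det2 p q - (if c = 0 then snd q - snd p else fst p - fst q)"
proof -
  obtain a b a' b' where pq: "p = (a, b)" "q = (a', b')"
    by fastforce
  show ?thesis
  proof (cases "c = 0")
    case True
    then have "odd a" "even b" "odd a'" "even b'"
      using assms(2,3) pq by (simp_all add: zcong_def)
    then obtain s t s' t' where "a = 2 * s + 1" "b = 2 * t" "a' = 2 * s' + 1" "b' = 2 * t'"
      by (metis oddE evenE)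
    then have "det2 p q - (b' - b) = 4 * (s * t' - s' * t)"
      by (simp add: pq det2_def algebra_simps)
    then show ?thesis
      using True pq by simp
  next
    case False
    then have "c = 1"
      using assms(1) by simp
    then have "even a" "odd b" "even a'" "odd b'"
      using assms(2,3) pq by (simp_all add: zcong_def)
    then obtain s t s' t' where "a = 2 * s" "b = 2 * t + 1" "a' = 2 * s'" "b' = 2 * t' + 1"
      by (metis oddE evenE)
    then have "det2 p q - (a - a') = 4 * (s * t' - s' * t)"
      by (simp add: pq det2_def algebra_simps)
    then show ?thesis
      using False pq by simp
  qed
qed

lemma det2_mod4_pigeonhole:
  assumes "c \<in> {0, 1}" "zcong 1 p1 (1 + c, c)" "zcong 1 p2 (1 + c, c)" "zcong 1 p3 (1 + c, c)"
  shows "4 dvd det2 p1 p2 \<or> 4 dvd det2 p1 p3 \<or> 4 dvd det2 p2 p3"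
proof -
  define key where "key p = (if c = 0 then snd p else - fst p)" for p :: zalpha
  have det: "4 dvd det2 p q - (key q - key p)" if "zcong 1 p (1 + c, c)" "zcong 1 q (1 + c, c)" for p q
    using det2_cong_mod4[OF assms(1) that] by (cases "c = 0") (simp_all add: key_def)
  have "even (key p)" if "zcong 1 p (1 + c, c)" for p
    using that assms(1) by (auto simp: key_def zcong_def)
  then have "even (key p1)" "even (key p2)" "even (key p3)"
    using assms(2-4) by blast+
  then have "4 dvd key p2 - key p1 \<or> 4 dvd key p3 - key p1 \<or> 4 dvd key p3 - key p2"
    by presburger
  then show ?thesis
    using det[OF assms(2,3)] det[OF assms(2,4)] det[OF assms(3,4)] by (metis dvd_add diff_add_cancel)
qed

section \<open>The ring Z[alpha] and congruences modulo powers of 2\<close>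

text \<open>Z[alpha] with alpha^2 = -D is realised inside the complex numbers, alpha = i sqrt D, so that ring
  identities can be proved by field arithmetic.\<close>

locale quadratic_order =
  fixes D :: int
  assumes D_pos: "D > 0"
begin

definition alpha :: complex where
  "alpha = \<i> * of_real (sqrt (of_int D))"

definition emb :: "zalpha \<Rightarrow> complex" where
  "emb p = of_int (fst p) + of_int (snd p) * alpha"

definition Zring :: "complex set" where
  "Zring = range emb"

definition cong2 :: "nat \<Rightarrow> complex \<Rightarrow> complex \<Rightarrow> bool" where
  "cong2 n x y \<longleftrightarrow> (\<exists>z\<in>Zring. x - y = 2 ^ n * z)"

lemma alpha_squared: "alpha * alpha = - of_int D"
proof -
  have "of_real (sqrt (of_int D)) * of_real (sqrt (of_int D)) = (of_int D :: complex)"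
    using D_pos by (simp flip: of_real_mult)
  then show ?thesis
    unfolding alpha_def by (simp add: algebra_simps)
qed

lemma cnj_alpha: "cnj alpha = - alpha"
  by (simp add: alpha_def)

lemma emb_zadd: "emb (zadd u v) = emb u + emb v"
  by (simp add: emb_def zadd_def algebra_simps)

lemma emb_zsub: "emb (zsub u v) = emb u - emb v"
  by (simp add: emb_def zsub_def algebra_simps)

lemma emb_zmul: "emb (zmul D u v) = emb u * emb v"
proof -
  have "emb u * emb v = of_int (fst u) * of_int (fst v) + of_int (snd u) * of_int (snd v) * (alpha * alpha)
      + (of_int (fst u) * of_int (snd v) + of_int (snd u) * of_int (fst v)) * alpha"
    by (simp add: emb_def algebra_simps)
  then show ?thesis
    by (simp add: alpha_squared emb_def zmul_def algebra_simps)
qed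

lemma emb_zpow: "emb (zpow D u k) = emb u ^ k"
  by (induction k) (simp_all add: emb_zmul emb_def[of "(1, 0)"])

lemma emb_mult_cnj:
  "emb q * cnj (emb p) = emb (fst p * fst q + D * snd p * snd q, fst p * snd q - fst q * snd p)"
proof -
  have "emb q * cnj (emb p) = of_int (fst p) * of_int (fst q) - of_int (snd p) * of_int (snd q) * (alpha * alpha)
      + (of_int (fst p) * of_int (snd q) - of_int (fst q) * of_int (snd p)) * alpha"
    by (simp add: emb_def cnj_alpha algebra_simps)
  then show ?thesis
    by (simp add: alpha_squared emb_def algebra_simps)
qed

lemma emb_norm: "emb (a, b) * cnj (emb (a, b)) = of_int (a\<^sup>2 + D * b\<^sup>2)"
  using emb_mult_cnj[of "(a, b)" "(a, b)"] by (simp add: emb_def power2_eq_square)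

lemma emb_eq_iff [simp]: "emb u = emb v \<longleftrightarrow> u = v"
proof
  assume "emb u = emb v"
  then have "Re (emb u) = Re (emb v)" "Im (emb u) = Im (emb v)"
    by simp_all
  with D_pos show "u = v"
    by (simp add: emb_def alpha_def prod_eq_iff)
qed simp

lemma emb_in_Zring [simp]: "emb p \<in> Zring"
  by (simp add: Zring_def)

lemma of_int_in_Zring [simp]: "of_int n \<in> Zring"
  using emb_in_Zring[of "(n, 0)"] by (simp add: emb_def)

lemma of_nat_in_Zring [simp]: "of_nat n \<in> Zring"
  using of_int_in_Zring[of "int n"] by simp

lemma zero_in_Zring [simp]: "0 \<in> Zring"
  using of_int_in_Zring[of 0] by simp

lemma one_in_Zring [simp]: "1 \<in> Zring"
  using of_int_in_Zring[of 1] by simp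

lemma numeral_in_Zring [simp]: "numeral k \<in> Zring"
  using of_int_in_Zring[of "numeral k"] by simp

lemma alpha_in_Zring [simp]: "alpha \<in> Zring"
  using emb_in_Zring[of "(0, 1)"] by (simp add: emb_def)

lemma Zring_add [simp]: "x \<in> Zring \<Longrightarrow> y \<in> Zring \<Longrightarrow> x + y \<in> Zring"
  by (auto simp: Zring_def emb_zadd[symmetric])

lemma Zring_diff [simp]: "x \<in> Zring \<Longrightarrow> y \<in> Zring \<Longrightarrow> x - y \<in> Zring"
  by (auto simp: Zring_def emb_zsub[symmetric])

lemma Zring_uminus [simp]: "x \<in> Zring \<Longrightarrow> - x \<in> Zring"
  using Zring_diff[of 0 x] by simp

lemma Zring_mult [simp]: "x \<in> Zring \<Longrightarrow> y \<in> Zring \<Longrightarrow> x * y \<in> Zring"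
  by (auto simp: Zring_def emb_zmul[symmetric])

lemma Zring_power [simp]: "x \<in> Zring \<Longrightarrow> x ^ k \<in> Zring"
  by (induction k) simp_all

lemma ZringE:
  assumes "x \<in> Zring"
  obtains a b where "x = emb (a, b)"
  using assms unfolding Zring_def by (metis prod.collapse rangeE)

lemma Zring_cnj [simp]: "x \<in> Zring \<Longrightarrow> cnj x \<in> Zring"
proof (elim ZringE)
  fix a b
  assume "x = emb (a, b)"
  then have "cnj x = emb (a, - b)"
    by (simp add: emb_def cnj_alpha)
  then show "cnj x \<in> Zring"
    by simp
qed

lemma cong2_refl [simp]: "cong2 n x x"
  unfolding cong2_def by (rule bexI[of _ 0]) simp_all

lemma cong2_sym: "cong2 n x y \<Longrightarrow> cong2 n y x"
  unfolding cong2_def by (metis Zring_uminus minus_diff_eq mult_minus_right)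

lemma cong2_trans [trans]: "cong2 n x y \<Longrightarrow> cong2 n y z \<Longrightarrow> cong2 n x z"
  unfolding cong2_def by (auto intro!: bexI[of _ "_ + _"] simp: algebra_simps)

lemma cong2_iff_diff: "cong2 n x y \<longleftrightarrow> cong2 n (x - y) 0"
  by (simp add: cong2_def)

lemma cong2_add: "cong2 n x y \<Longrightarrow> cong2 n x' y' \<Longrightarrow> cong2 n (x + x') (y + y')"
  unfolding cong2_def by (auto intro!: bexI[of _ "_ + _"] simp: algebra_simps)

lemma cong2_diff:
  assumes "cong2 n x y" "cong2 n x' y'"
  shows "cong2 n (x - x') (y - y')"
proof -
  obtain z z' where "z \<in> Zring" "z' \<in> Zring" "x - y = 2 ^ n * z" "x' - y' = 2 ^ n * z'"
    using assms unfolding cong2_def by blast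
  then show ?thesis
    unfolding cong2_def by (intro bexI[of _ "z - z'"]) (simp_all add: algebra_simps)
qed

lemma cong2_uminus: "cong2 n x y \<Longrightarrow> cong2 n (- x) (- y)"
  using cong2_diff[OF cong2_refl[of n 0]] by simp

lemma cong2_mult_left: "w \<in> Zring \<Longrightarrow> cong2 n x y \<Longrightarrow> cong2 n (w * x) (w * y)"
  unfolding cong2_def by (auto intro!: bexI[of _ "w * _"] simp: algebra_simps)

lemma cong2_mult_right: "w \<in> Zring \<Longrightarrow> cong2 n x y \<Longrightarrow> cong2 n (x * w) (y * w)"
  using cong2_mult_left by (simp add: mult.commute)

lemma cong2_mult:
  assumes "x \<in> Zring" "y' \<in> Zring" "cong2 n x y" "cong2 n x' y'"
  shows "cong2 n (x * x') (y * y')"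
proof -
  have "cong2 n (x * x') (x * y')"
    using assms by (simp add: cong2_mult_left)
  also have "cong2 n (x * y') (y * y')"
    using assms by (simp add: cong2_mult_right)
  finally show ?thesis .
qed

lemma cong2_power: "x \<in> Zring \<Longrightarrow> y \<in> Zring \<Longrightarrow> cong2 n x y \<Longrightarrow> cong2 n (x ^ k) (y ^ k)"
  by (induction k) (simp_all add: cong2_mult)

lemma cong2_mono: "k \<le> n \<Longrightarrow> cong2 n x y \<Longrightarrow> cong2 k x y"
proof -
  assume "k \<le> n" "cong2 n x y"
  then obtain z where "z \<in> Zring" "x - y = 2 ^ k * (2 ^ (n - k) * z)"
    unfolding cong2_def by (auto simp flip: mult.assoc power_add)
  then show ?thesis
    unfolding cong2_def by (auto intro!: bexI[of _ "2 ^ (n - k) * z"])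
qed

lemma cong2_cancel_pow2: "cong2 (n + k) (2 ^ k * x) 0 \<Longrightarrow> cong2 n x 0"
  unfolding cong2_def by (auto simp: power_add mult.assoc)

definition coherent :: "(nat \<Rightarrow> complex) \<Rightarrow> bool" where
  "coherent f \<longleftrightarrow> (\<forall>n. cong2 n (f (Suc n)) (f n))"

lemma coherent_cong2:
  assumes "coherent f" "n \<le> n'"
  shows "cong2 n (f n') (f n)"
proof -
  have "cong2 n (f (n + k)) (f n)" for k
  proof (induction k)
    case 0
    show ?case by simp
  next
    case (Suc k)
    have "cong2 (n + k) (f (Suc (n + k))) (f (n + k))"
      using assms(1) unfolding coherent_def by blast
    then have "cong2 n (f (n + Suc k)) (f (n + k))"
      using cong2_mono[of n "n + k"] by simp
    then show ?case
      using Suc.IH by (rule cong2_trans)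
  qed
  then show ?thesis
    using assms(2) by (metis le_add_diff_inverse)
qed

lemma coherent_const [simp]: "coherent (\<lambda>n. c)"
  by (simp add: coherent_def)

lemma coherent_add: "coherent f \<Longrightarrow> coherent g \<Longrightarrow> coherent (\<lambda>n. f n + g n)"
  by (simp add: coherent_def cong2_add)

lemma coherent_mult_left: "w \<in> Zring \<Longrightarrow> coherent f \<Longrightarrow> coherent (\<lambda>n. w * f n)"
  by (simp add: coherent_def cong2_mult_left)

lemma zcong_iff_cong2: "zcong n u v \<longleftrightarrow> cong2 n (emb u) (emb v)"
proof
  assume "zcong n u v"
  then obtain p q where "fst u - fst v = 2 ^ n * p" "snd u - snd v = 2 ^ n * q"
    unfolding zcong_def by (auto elim!: dvdE)
  then have "emb u - emb v = 2 ^ n * emb (p, q)"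
    unfolding emb_def by (simp add: algebra_simps flip: of_int_diff)
  then show "cong2 n (emb u) (emb v)"
    unfolding cong2_def using emb_in_Zring by blast
next
  assume "cong2 n (emb u) (emb v)"
  then obtain p where "emb u - emb v = 2 ^ n * emb p"
    unfolding cong2_def Zring_def by auto
  then have "emb (zsub u v) = emb (2 ^ n * fst p, 2 ^ n * snd p)"
    unfolding emb_zsub by (simp add: emb_def algebra_simps)
  then show "zcong n u v"
    unfolding zcong_def zsub_def by auto
qed

lemma cong2_odd_cancel:
  assumes "odd q" "x \<in> Zring" "cong2 n (of_int q * x) 0"
  shows "cong2 n x 0"
proof -
  obtain a b where x: "x = emb (a, b)"
    using assms(2) by (rule ZringE)
  then have "of_int q * x = emb (q * a, q * b)"
    by (simp add: emb_def algebra_simps)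
  then have "2 ^ n dvd q * a" "2 ^ n dvd q * b"
    using assms(3) zcong_iff_cong2[of n "(q * a, q * b)" "(0, 0)"] by (simp_all add: emb_def zcong_def)
  moreover have "coprime ((2::int) ^ n) q"
    using assms(1) by simp
  ultimately have "zcong n (a, b) (0, 0)"
    unfolding zcong_def by (simp add: coprime_dvd_mult_right_iff)
  then show ?thesis
    using x by (simp add: zcong_iff_cong2 emb_def)
qed

lemma emb_mult_cnj_cong2_of_int:
  assumes "4 dvd det2 p q"
  shows "cong2 2 (emb q * cnj (emb p)) (of_int (fst p * fst q + D * snd p * snd q))"
proof -
  have "zcong 2 (fst p * fst q + D * snd p * snd q, det2 p q) (fst p * fst q + D * snd p * snd q, 0)"
    using assms by (simp add: zcong_def)
  then show ?thesis
    by (simp add: zcong_iff_cong2 emb_mult_cnj det2_def emb_def[of "(_, 0)"])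
qed

lemma cong2_four_mult: "cong2 1 x y \<Longrightarrow> cong2 3 (4 * x) (4 * y)"
  unfolding cong2_def by (auto simp: algebra_simps)

lemma cong2_four_neg: "y \<in> Zring \<Longrightarrow> cong2 3 (4 * y) (- (4 * y))"
  unfolding cong2_def by (intro bexI[of _ y]) simp_all

lemma odd_square_cong2:
  assumes "odd n" "y \<in> Zring"
  shows "cong2 3 (of_int n ^ 2 * y) y"
proof -
  obtain a where a: "n = 2 * a + 1"
    using assms(1) by (rule oddE)
  have "even (a * (a + 1))"
    by simp
  then obtain b where "a * (a + 1) = 2 * b"
    by blast
  then have "n ^ 2 = 1 + 8 * b"
    unfolding a by (simp add: algebra_simps power2_eq_square)
  then have "of_int n ^ 2 * y - y = 2 ^ 3 * (of_int b * y)"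
    by (simp add: algebra_simps flip: of_int_power)
  then show ?thesis
    using assms(2) unfolding cong2_def by (intro bexI[of _ "of_int b * y"]) simp_all
qed

lemma power_double_odd_cong2:
  assumes "odd m" "x \<in> Zring" "cong2 3 (x ^ 4) 1"
  shows "cong2 3 (x ^ (2 * m)) (x\<^sup>2)"
proof -
  obtain k where "m = 2 * k + 1"
    using assms(1) by (rule oddE)
  then have "x ^ (2 * m) = x\<^sup>2 * (x ^ 4) ^ k"
    by (simp add: power_add power2_eq_square flip: power_mult)
  moreover have "cong2 3 ((x ^ 4) ^ k) (1 ^ k)"
    using assms by (intro cong2_power) simp_all
  ultimately show ?thesis
    using cong2_mult_left[of "x\<^sup>2" 3 "(x ^ 4) ^ k" 1] assms(2) by simp
qed

lemma power_add_first_order: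
  assumes "y \<in> Zring" "h \<in> Zring"
  shows "\<exists>E\<in>Zring. (y + h) ^ Suc n = y ^ Suc n + of_nat (Suc n) * y ^ n * h + h\<^sup>2 * E"
proof (induction n)
  case 0
  show ?case by (rule bexI[of _ 0]) simp_all
next
  case (Suc n)
  then obtain E where "E \<in> Zring" "(y + h) ^ Suc n = y ^ Suc n + of_nat (Suc n) * y ^ n * h + h\<^sup>2 * E"
    by blast
  moreover have "(y + h) * (y ^ Suc n + of_nat (Suc n) * y ^ n * h + h\<^sup>2 * E) =
      y ^ Suc (Suc n) + of_nat (Suc (Suc n)) * y ^ Suc n * h + h\<^sup>2 * (y * E + of_nat (Suc n) * y ^ n + h * E)"
    by (simp add: algebra_simps power2_eq_square)
  ultimately show ?case
    using assms by (intro bexI[of _ "y * E + of_nat (Suc n) * y ^ n + h * E"]) simp_all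
qed

lemma emb_O_of [simp]: "emb (O_of p n) = emb p"
  by (simp add: O_of_def)

lemma emb_O_zero [simp]: "emb (O_zero n) = 0"
  by (simp add: O_zero_def O_of_def emb_def)

lemma emb_O_one [simp]: "emb (O_one n) = 1"
  by (simp add: O_one_def O_of_def emb_def)

lemma emb_O_add [simp]: "emb (O_add x y n) = emb (x n) + emb (y n)"
  by (simp add: O_add_def emb_zadd)

lemma emb_O_sub [simp]: "emb (O_sub x y n) = emb (x n) - emb (y n)"
  by (simp add: O_sub_def emb_zsub)

lemma emb_O_mul [simp]: "emb (O_mul D x y n) = emb (x n) * emb (y n)"
  by (simp add: O_mul_def emb_zmul)

lemma emb_O_pow [simp]: "emb (O_pow D x k n) = emb (x n) ^ k"
  by (simp add: O_pow_def emb_zpow)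

lemma O_eq_iff_cong2: "O_eq x y \<longleftrightarrow> (\<forall>n. cong2 n (emb (x n)) (emb (y n)))"
  by (simp add: O_eq_def zcong_iff_cong2)

lemma in_O_iff_coherent: "in_O x \<longleftrightarrow> coherent (\<lambda>n. emb (x n))"
  by (simp add: in_O_def coherent_def zcong_iff_cong2)

definition O_of_seq :: "(nat \<Rightarrow> complex) \<Rightarrow> Oelt" where
  "O_of_seq f = (\<lambda>n. inv emb (f n))"

lemma emb_O_of_seq: "f n \<in> Zring \<Longrightarrow> emb (O_of_seq f n) = f n"
  unfolding O_of_seq_def Zring_def by (rule f_inv_into_f)

lemma diag_form_eval:
  assumes "\<forall>i. snd (x i) = 0"
  shows "snd (diag_form D d a s x) = 0"
    and "emb (fst (diag_form D d a s x) n) = (\<Sum>i<s. emb (a i n) * emb (fst (x i) n) ^ d)"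
proof -
  define F where "F = (\<lambda>i acc. K_add D (K_mul D (K_of_O (a i)) (K_pow D (x i) d)) acc)"
  have "snd (foldr F is K_zero) = 0 \<and>
      emb (fst (foldr F is K_zero) n) = (\<Sum>i\<leftarrow>is. emb (a i n) * emb (fst (x i) n) ^ d)" for "is"
    using assms by (induction "is") (simp_all add: F_def K_zero_def K_add_def K_mul_def K_of_O_def K_pow_def)
  then show "snd (diag_form D d a s x) = 0"
    and "emb (fst (diag_form D d a s x) n) = (\<Sum>i<s. emb (a i n) * emb (fst (x i) n) ^ d)"
    by (simp_all add: diag_form_def F_def atLeast0LessThan[symmetric] sum_set_upt_conv_sum_list_nat[symmetric])
qed

lemma diag_form_zero_from_approximations:
  assumes X: "\<forall>i<s. (\<forall>n. X i n \<in> Zring) \<and> coherent (X i)"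
    and nonzero: "i0 < s" "\<not> (\<forall>n. cong2 n (X i0 n) 0)"
    and zero: "\<forall>n. cong2 n (\<Sum>i<s. emb (a i n) * X i n ^ d) 0"
  shows "\<exists>x. (\<forall>i<s. in_O (fst (x i))) \<and> (\<exists>i<s. \<not> O_eq (fst (x i)) O_zero) \<and>
    K_eq D (diag_form D d a s x) K_zero"
proof -
  define x where "x i = (O_of_seq (X i), 0::nat)" for i
  have emb_x: "emb (fst (x i) n) = X i n" if "i < s" for i n
    using X that by (simp add: x_def emb_O_of_seq)
  have "\<forall>i<s. in_O (fst (x i))"
    using X emb_x by (auto simp: in_O_iff_coherent coherent_def)
  moreover have "\<not> O_eq (fst (x i0)) O_zero"
    using nonzero emb_x by (simp add: O_eq_iff_cong2)
  moreover have "K_eq D (diag_form D d a s x) K_zero"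
  proof -
    have "emb (fst (diag_form D d a s x) n) = (\<Sum>i<s. emb (a i n) * X i n ^ d)" for n
      using diag_form_eval(2)[of x] emb_x by (simp add: x_def)
    then show ?thesis
      using zero diag_form_eval(1)[of x]
      by (simp add: x_def K_eq_def K_zero_def O_eq_iff_cong2 O_two_def emb_def[of "(1, 0)"])
  qed
  ultimately show ?thesis
    using nonzero(1) by blast
qed

end

section \<open>Units and the uniformizer\<close>

locale dyadic_order = quadratic_order +
  assumes D_cases: "D = 1 \<or> D = 5"
begin

text \<open>As -D = 3 mod 4, the prime 2 ramifies, 2 = unit * unif^2, and a + b alpha is a unit of O
  exactly when unif does not divide it, i.e. when a + b is odd.\<close>

definition pi_unit :: "complex \<Rightarrow> bool" where
  "pi_unit x \<longleftrightarrow> (\<exists>a b. x = emb (a, b) \<and> odd (a + b))"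

definition unif :: complex where
  "unif = 1 + alpha"

lemma pi_unit_emb_iff [simp]: "pi_unit (emb (a, b)) \<longleftrightarrow> odd (a + b)"
  unfolding pi_unit_def by auto

lemma pi_unit_in_Zring: "pi_unit x \<Longrightarrow> x \<in> Zring"
  unfolding pi_unit_def by auto

lemma pi_unit_of_int [simp]: "pi_unit (of_int n) \<longleftrightarrow> odd n"
  using pi_unit_emb_iff[of n 0] by (simp add: emb_def)

lemma pi_unit_of_nat [simp]: "pi_unit (of_nat m) \<longleftrightarrow> odd m"
  using pi_unit_of_int[of "int m"] by simp

lemma pi_unit_one [simp]: "pi_unit 1"
  using pi_unit_of_int[of 1] by simp

lemma pi_unit_uminus [simp]: "pi_unit (- x) \<longleftrightarrow> pi_unit x"
proof -
  have "pi_unit (- y)" if y: "pi_unit y" for y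
  proof -
    obtain a b where "y = emb (a, b)" "odd (a + b)"
      using y unfolding pi_unit_def by blast
    moreover have "- emb (a, b) = emb (- a, - b)"
      by (simp add: emb_def)
    ultimately show ?thesis
      by simp
  qed
  then show ?thesis
    by (metis minus_minus)
qed

lemma pi_unit_mult:
  assumes "pi_unit x" "pi_unit y"
  shows "pi_unit (x * y)"
proof -
  obtain a b c e where x: "x = emb (a, b)" "odd (a + b)" and y: "y = emb (c, e)" "odd (c + e)"
    using assms unfolding pi_unit_def by blast
  have "a * c - D * b * e + (a * e + b * c) = (a + b) * (c + e) - (D + 1) * b * e"
    by (simp add: algebra_simps)
  moreover have "even ((D + 1) * b * e)"
    using D_cases by auto
  ultimately have "odd (a * c - D * b * e + (a * e + b * c))"
    using x y by simp
  then show ?thesis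
    using x y by (simp flip: emb_zmul add: zmul_def)
qed

lemma pi_unit_power: "pi_unit x \<Longrightarrow> pi_unit (x ^ k)"
  by (induction k) (simp_all add: pi_unit_mult)

lemma pi_unit_cnj:
  assumes "pi_unit x"
  shows "pi_unit (cnj x)"
proof -
  obtain a b where "x = emb (a, b)" "odd (a + b)"
    using assms unfolding pi_unit_def by blast
  moreover have "cnj (emb (a, b)) = emb (a, - b)"
    by (simp add: emb_def cnj_alpha)
  ultimately show ?thesis
    by simp
qed

lemma pi_unit_norm:
  assumes "pi_unit x"
  obtains n where "odd n" "x * cnj x = of_int n"
proof -
  obtain a b where x: "x = emb (a, b)" "odd (a + b)"
    using assms unfolding pi_unit_def by blast
  have "a\<^sup>2 + D * b\<^sup>2 = (a + b)\<^sup>2 - 2 * a * b + (D - 1) * b\<^sup>2"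
    by (simp add: algebra_simps power2_eq_square)
  moreover have "even ((D - 1) * b\<^sup>2)"
    using D_cases by auto
  ultimately have "odd (a\<^sup>2 + D * b\<^sup>2)"
    using x(2) by simp
  with that show ?thesis
    using x(1) emb_norm by blast
qed

lemma pi_unit_cong2:
  assumes "pi_unit x" "y \<in> Zring" "cong2 1 x y"
  shows "pi_unit y"
proof -
  obtain a b where x: "x = emb (a, b)" "odd (a + b)"
    using assms(1) unfolding pi_unit_def by blast
  obtain c e where y: "y = emb (c, e)"
    using assms(2) by (rule ZringE)
  have "even (a - c)" "even (b - e)"
    using assms(3) x y by (simp_all flip: zcong_iff_cong2 add: zcong_def)
  then have "odd (c + e)"
    using x(2) by presburger
  then show ?thesis
    using y by simp
qed

lemma unif_in_Zring [simp]: "unif \<in> Zring"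
  by (simp add: unif_def)

lemma not_pi_unit_unif_mult:
  assumes "z \<in> Zring"
  shows "\<not> pi_unit (unif * z)"
proof -
  obtain c e where z: "z = emb (c, e)"
    using assms by (rule ZringE)
  have "unif * z = emb (zmul D (1, 1) (c, e))"
    by (simp add: emb_zmul z unif_def emb_def[of "(1, 1)"])
  also have "\<dots> = emb (c - D * e, c + e)"
    by (simp add: zmul_def add.commute)
  finally have "unif * z = emb (c - D * e, c + e)" .
  moreover have "even (c - D * e + (c + e))"
    using D_cases by auto
  ultimately show ?thesis
    by simp
qed

lemma not_pi_unit_if_cong2_zero:
  assumes "cong2 1 x 0"
  shows "\<not> pi_unit x"
proof -
  obtain a b where "x = 2 * emb (a, b)"
    using assms unfolding cong2_def by (auto elim: ZringE)
  then have "x = emb (2 * a, 2 * b)"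
    by (simp add: emb_def algebra_simps)
  then show ?thesis
    by simp
qed

lemma unif_norm: "unif * cnj unif = of_int (1 + D)"
  using emb_norm[of 1 1] by (simp add: unif_def emb_def)

lemma cong2_unif_power_cancel:
  assumes "x \<in> Zring" "cong2 (t + 1) (unif ^ t * x) 0"
  shows "cong2 1 x 0"
proof -
  define h where "h = (1 + D) div 2"
  have h: "odd h" "1 + D = 2 * h"
    using D_cases by (auto simp: h_def)
  have "cnj unif ^ t * (unif ^ t * x) = (unif * cnj unif) ^ t * x"
    by (simp add: power_mult_distrib algebra_simps)
  also have "\<dots> = 2 ^ t * (of_int (h ^ t) * x)"
    unfolding unif_norm h(2) by (simp add: power_mult_distrib)
  finally have norm_power: "cnj unif ^ t * (unif ^ t * x) = 2 ^ t * (of_int (h ^ t) * x)" .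
  have "cong2 (1 + t) (2 ^ t * (of_int (h ^ t) * x)) 0"
    using cong2_mult_left[OF _ assms(2), of "cnj unif ^ t"] unfolding norm_power by (simp add: add.commute)
  then have "cong2 1 (of_int (h ^ t) * x) 0"
    by (rule cong2_cancel_pow2)
  then show ?thesis
    using h(1) assms(1) cong2_odd_cancel[of "h ^ t" x 1] by simp
qed

lemma unif_power_unit_not_cong2:
  assumes "r < r'" "pi_unit u" "u' \<in> Zring"
  shows "\<not> cong2 (r + 1) (unif ^ r * u) (unif ^ r' * u')"
proof
  define w where "w = unif ^ (r' - r - 1) * u'"
  have w: "w \<in> Zring"
    using assms(3) by (simp add: w_def)
  have "unif ^ r * u - unif ^ r' * u' = unif ^ r * (u - unif * w)"
    using assms(1) by (simp add: w_def algebra_simps flip: power_add power_Suc)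
  moreover assume "cong2 (r + 1) (unif ^ r * u) (unif ^ r' * u')"
  ultimately have "cong2 (r + 1) (unif ^ r * (u - unif * w)) 0"
    using cong2_iff_diff[of "r + 1" "unif ^ r * u" "unif ^ r' * u'"] by simp
  then have "cong2 1 (u - unif * w) 0"
    using cong2_unif_power_cancel[of "u - unif * w" r] assms(2) w by (simp add: pi_unit_in_Zring)
  then have "cong2 1 u (unif * w)"
    using cong2_iff_diff[of 1 u "unif * w"] by simp
  then have "pi_unit (unif * w)"
    using pi_unit_cong2[OF assms(2)] w by simp
  then show False
    using w not_pi_unit_unif_mult by simp
qed

lemma unif_power_unit_not_cong2_zero:
  assumes "pi_unit u"
  shows "\<not> cong2 (t + 1) (unif ^ t * u) 0"
proof
  assume "cong2 (t + 1) (unif ^ t * u) 0"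
  then have "cong2 1 u 0"
    by (rule cong2_unif_power_cancel[OF pi_unit_in_Zring[OF assms]])
  then show False
    using assms not_pi_unit_if_cong2_zero by blast
qed

lemma unif_squared: "unif\<^sup>2 = 1 - of_int D + 2 * alpha"
  by (simp add: unif_def power2_eq_square alpha_squared algebra_simps)

lemma unif_squared_even: "unif\<^sup>2 = 2 * emb ((1 - D) div 2, 1)"
proof -
  have "(1 - of_int D :: complex) = 2 * of_int ((1 - D) div 2)"
    using D_cases by auto
  then show ?thesis
    unfolding unif_squared by (simp add: emb_def)
qed

lemma unif_power4: "unif ^ 4 = - 4 - 8 * (of_int ((D - 1) div 2) * alpha)"
proof -
  have "unif ^ 4 = (1 - of_int D + 2 * alpha)\<^sup>2"
    by (simp flip: unif_squared power_mult)
  also have "\<dots> = (1 - of_int D)\<^sup>2 - 4 * of_int D + 4 * (1 - of_int D) * alpha"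
    by (simp add: power2_eq_square algebra_simps) (simp add: alpha_squared flip: mult.assoc)
  also have "\<dots> = - 4 - 8 * (of_int ((D - 1) div 2) * alpha)"
    using D_cases by (elim disjE) (simp_all add: algebra_simps)
  finally show ?thesis .
qed

lemma unif_power4_cong2:
  assumes "z \<in> Zring"
  shows "cong2 3 (unif ^ 4 * z) (- (4 * z))"
proof -
  have "unif ^ 4 * z - - (4 * z) = 2 ^ 3 * (- of_int ((D - 1) div 2) * alpha * z)"
    unfolding unif_power4 by (simp add: algebra_simps)
  then show ?thesis
    using assms unfolding cong2_def by (intro bexI[of _ "- of_int ((D - 1) div 2) * alpha * z"]) simp_all
qed

section \<open>Hensel lifting\<close>

lemma hensel_step:
  assumes m: "odd m" and j: "j \<ge> 3" and U: "pi_unit U" and T: "T \<in> Zring" and y: "pi_unit y"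
    and root: "cong2 j (U * y ^ (2 * m) + T) 0"
  obtains y' where "pi_unit y'" "cong2 (j - 1) y' y" "cong2 (j + 1) (U * y' ^ (2 * m) + T) 0"
proof -
  obtain r where r: "r \<in> Zring" "U * y ^ (2 * m) + T = 2 ^ j * r"
    using root unfolding cong2_def by auto
  define V where "V = U * of_nat m * y ^ (2 * m - 1)"
  have "pi_unit V"
    using U y m unfolding V_def by (simp add: pi_unit_mult pi_unit_power)
  then obtain n where n: "odd n" "V * cnj V = of_int n"
    by (rule pi_unit_norm)
  then obtain n' where n': "1 + of_int n = (2 * of_int n' :: complex)"
    by (metis odd_add odd_one evenE of_int_1 of_int_add of_int_mult of_int_numeral)
  define t where "t = r * cnj V"
  define h where "h = 2 ^ (j - 1) * t"
  have yZ: "y \<in> Zring" and UZ: "U \<in> Zring" and tZ: "t \<in> Zring" and hZ: "h \<in> Zring"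
    using U y r(1) \<open>pi_unit V\<close> by (simp_all add: pi_unit_in_Zring t_def h_def)
  have "Suc (2 * m - 1) = 2 * m"
    using m by (cases m) auto
  then obtain E where E: "E \<in> Zring"
      "(y + h) ^ (2 * m) = y ^ (2 * m) + of_nat (2 * m) * y ^ (2 * m - 1) * h + h\<^sup>2 * E"
    using power_add_first_order[OF yZ hZ, of "2 * m - 1"] by auto
  \<comment> \<open>Newton step: the derivative 2 V is exactly divisible by 2, so h cancels the error 2^j r, while
    h^2 is divisible by 2^(j+1) as j \<ge> 3.\<close>
  have "U * (y + h) ^ (2 * m) + T = (U * y ^ (2 * m) + T) + 2 * 2 ^ (j - 1) * (V * cnj V) * r + U * h\<^sup>2 * E"
    unfolding E(2) by (simp add: h_def t_def V_def algebra_simps)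
  also have "\<dots> = 2 ^ j * r * (1 + of_int n) + U * ((2 ^ (j - 1))\<^sup>2 * t\<^sup>2) * E"
    using two_power_pred[of j, where 'a = complex] j unfolding r(2) n(2) h_def power_mult_distrib by (simp add: algebra_simps)
  also have "\<dots> = 2 ^ (j + 1) * (r * of_int n' + U * (2 ^ (j - 3) * t\<^sup>2) * E)"
    unfolding n' two_power_pred_square[OF j] by (simp add: algebra_simps)
  finally have "cong2 (j + 1) (U * (y + h) ^ (2 * m) + T) 0"
    unfolding cong2_def using r(1) UZ tZ E(1) by auto
  moreover have close: "cong2 (j - 1) (y + h) y"
    unfolding cong2_def h_def using tZ by auto
  moreover have "pi_unit (y + h)"
    using j cong2_sym[OF close] cong2_mono[of 1 "j - 1"] pi_unit_cong2[OF y] yZ hZ by simp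
  ultimately show ?thesis
    using that by blast
qed

lemma hensel_lift:
  assumes m: "odd m"
    and U: "\<forall>n\<ge>1. pi_unit (U n)" "coherent U"
    and T: "\<forall>n. T n \<in> Zring" "coherent T"
    and y0: "pi_unit y0" "cong2 3 (U 3 * y0 ^ (2 * m) + T 3) 0"
  obtains y where "\<forall>n. pi_unit (y n)" "coherent y" "\<forall>n. cong2 n (U n * y n ^ (2 * m) + T n) 0"
proof -
  define root_at where "root_at n z \<longleftrightarrow> pi_unit z \<and> cong2 (n + 3) (U (n + 3) * z ^ (2 * m) + T (n + 3)) 0" for n z
  have shift: "cong2 n (U n' * z ^ (2 * m) + T n') (U n * z ^ (2 * m) + T n)"
    if "n \<le> n'" "z \<in> Zring" for n n' z
    using that coherent_cong2[OF U(2)] coherent_cong2[OF T(2)] by (simp add: cong2_add cong2_mult_right)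
  have "\<exists>z'. root_at (Suc n) z' \<and> cong2 (n + 2) z' z" if "root_at n z" for n z
  proof -
    have "cong2 (n + 3) (U (n + 4) * z ^ (2 * m) + T (n + 4)) (U (n + 3) * z ^ (2 * m) + T (n + 3))"
      using that shift[of "n + 3" "n + 4" z] by (simp add: root_at_def pi_unit_in_Zring)
    also have "cong2 (n + 3) (U (n + 3) * z ^ (2 * m) + T (n + 3)) 0"
      using that by (simp add: root_at_def)
    finally have "cong2 (n + 3) (U (n + 4) * z ^ (2 * m) + T (n + 4)) 0" .
    moreover have "pi_unit (U (n + 4))" "pi_unit z"
      using U(1) that by (simp_all add: root_at_def)
    ultimately obtain z' where "pi_unit z'" "cong2 (n + 3 - 1) z' z"
        "cong2 (n + 3 + 1) (U (n + 4) * z' ^ (2 * m) + T (n + 4)) 0"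
      using hensel_step[OF m _ _ T(1)[rule_format]] by (metis le_add2)
    then show ?thesis
      by (auto simp: root_at_def numeral_eq_Suc)
  qed
  moreover have "root_at 0 y0"
    using y0 by (simp add: root_at_def)
  ultimately obtain y where y: "\<forall>n. root_at n (y n) \<and> cong2 (n + 2) (y (Suc n)) (y n)"
    using dependent_nat_choice[of root_at "\<lambda>n z z'. cong2 (n + 2) z' z"] by blast
  show ?thesis
  proof (rule that)
    show "\<forall>n. pi_unit (y n)"
      using y by (simp add: root_at_def)
    show "coherent y"
      unfolding coherent_def using y cong2_mono[OF le_add1] by blast
    show "\<forall>n. cong2 n (U n * y n ^ (2 * m) + T n) 0"
    proof
      fix n
      have "cong2 n (U (n + 3) * y n ^ (2 * m) + T (n + 3)) (U n * y n ^ (2 * m) + T n)"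
        using y shift[of n "n + 3" "y n"] by (simp add: root_at_def pi_unit_in_Zring)
      then have "cong2 n (U n * y n ^ (2 * m) + T n) (U (n + 3) * y n ^ (2 * m) + T (n + 3))"
        by (rule cong2_sym)
      also have "cong2 n (U (n + 3) * y n ^ (2 * m) + T (n + 3)) 0"
        using y cong2_mono[of n "n + 3"] by (simp add: root_at_def)
      finally show "cong2 n (U n * y n ^ (2 * m) + T n) 0" .
    qed
  qed
qed

section \<open>The reduced equation modulo 8\<close>

lemma zpow_residues_mod8:
  assumes "p \<in> {1, 3, 5, 7}" "q \<in> {0, 1}" "e \<in> {(1, 0), (0, 1)}"
  shows "\<exists>x\<in>{(1, 0), (0, 1), (1, 2), (2, 1)}. \<exists>W\<in>{0, 1}. zcong 3 (zpow D x 4) (1, 0) \<and>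
    zcong 3 (zpow D x 2) (p + 4 * fst e * W, 4 * q + 4 * snd e * W)"
  using assms D_cases by (elim disjE insertE emptyE) (simp_all add: zcong_def zmul_def numeral_eq_Suc)

lemma unit_with_square_mod8:
  assumes "odd p" "e \<in> {(1, 0), (0, 1)}"
  obtains x W where "pi_unit x" "W \<in> {0, 1}" "cong2 3 (x ^ 4) 1"
    "cong2 3 (x\<^sup>2) (emb (p, 4 * q) + of_int W * (4 * emb e))"
proof -
  have p8: "p mod 8 \<in> {1, 3, 5, 7}"
    using assms(1) by (simp only: insert_iff empty_iff) presburger
  have q2: "q mod 2 \<in> {0, 1}"
    by (simp only: insert_iff empty_iff) presburger
  obtain x W where x: "x \<in> {(1, 0), (0, 1), (1, 2), (2, 1)}" "W \<in> {0, 1}"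
    "zcong 3 (zpow D x 4) (1, 0)" "zcong 3 (zpow D x 2) (p mod 8 + 4 * fst e * W, 4 * (q mod 2) + 4 * snd e * W)"
    using zpow_residues_mod8[OF p8 q2 assms(2)] by (elim bexE conjE) (rule that)
  have "cong2 3 ((emb x)\<^sup>2) (emb (p mod 8 + 4 * fst e * W, 4 * (q mod 2) + 4 * snd e * W))"
    using x(4) by (simp add: zcong_iff_cong2 emb_zpow)
  also have "cong2 3 (emb (p mod 8 + 4 * fst e * W, 4 * (q mod 2) + 4 * snd e * W))
      (emb (p + 4 * fst e * W, 4 * q + 4 * snd e * W))"
    unfolding zcong_iff_cong2[symmetric] zcong_def by (simp; presburger)
  also have "emb (p + 4 * fst e * W, 4 * q + 4 * snd e * W) = emb (p, 4 * q) + of_int W * (4 * emb e)"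
    by (simp add: emb_def algebra_simps)
  finally have "cong2 3 ((emb x)\<^sup>2) (emb (p, 4 * q) + of_int W * (4 * emb e))" .
  moreover have "cong2 3 (emb x ^ 4) 1"
    using x(3) by (simp add: zcong_iff_cong2 emb_zpow emb_def[of "(1, 0)"])
  moreover have "pi_unit (emb x)"
    using x(1) by auto
  ultimately show ?thesis
    using that x(2) by blast
qed

lemma pi_unit_cong2_of_int_mod4:
  assumes "pi_unit z" "cong2 2 z (of_int r)"
  obtains p q where "odd p" "z = emb (p, 4 * q)"
proof -
  obtain a b where ab: "z = emb (a, b)"
    using pi_unit_in_Zring[OF assms(1)] by (rule ZringE)
  have "zcong 2 (a, b) (r, 0)"
    using assms(2) ab by (simp add: zcong_iff_cong2 emb_def)
  then obtain q where "b = 4 * q"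
    unfolding zcong_def by (auto elim!: dvdE)
  moreover have "odd a"
    using assms(1) ab \<open>b = 4 * q\<close> by simp
  ultimately show ?thesis
    using that ab by blast
qed

lemma pi_unit_cong2_basis:
  assumes "pi_unit g"
  obtains e where "e \<in> {(1, 0), (0, 1)}" "cong2 1 g (emb e)"
proof -
  obtain g1 g2 where g: "g = emb (g1, g2)" "odd (g1 + g2)"
    using assms unfolding pi_unit_def by blast
  define e :: zalpha where "e = (if odd g1 then (1, 0) else (0, 1))"
  have "cong2 1 g (emb e)"
    using g(2) by (simp add: g(1) e_def flip: zcong_iff_cong2 add: zcong_def)
  then show ?thesis
    using that[of e] by (simp add: e_def)
qed

lemma four_cong2_unif_power4:
  assumes "g \<in> Zring" "cong2 1 g z"
  shows "cong2 3 (4 * z) (unif ^ 4 * g)"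
proof -
  have "cong2 3 (4 * z) (4 * g)"
    using cong2_four_mult[OF cong2_sym[OF assms(2)]] .
  also have "cong2 3 (4 * g) (- (4 * g))"
    using assms(1) by (rule cong2_four_neg)
  also have "cong2 3 (- (4 * g)) (unif ^ 4 * g)"
    using cong2_sym[OF unif_power4_cong2[OF assms(1)]] .
  finally show ?thesis .
qed

lemma root_mod8_from_square:
  assumes m: "odd m" and U: "U \<in> Zring" "U * cnj U = of_int n" "odd n" and Y: "Y \<in> Zring"
    and x: "x \<in> Zring" "cong2 3 (x ^ 4) 1" "cong2 3 (x\<^sup>2) (- of_int n * cnj U * Y)"
  shows "cong2 3 (U * x ^ (2 * m) + Y) 0"
proof -
  have "cong2 3 (U * x ^ (2 * m)) (U * x\<^sup>2)"
    by (rule cong2_mult_left[OF U(1) power_double_odd_cong2[OF m x(1,2)]])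
  also have "cong2 3 (U * x\<^sup>2) (U * (- of_int n * cnj U * Y))"
    by (rule cong2_mult_left[OF U(1) x(3)])
  also have "U * (- of_int n * cnj U * Y) = - (of_int n ^ 2 * Y)"
    by (simp add: algebra_simps power2_eq_square flip: U(2))
  also have "cong2 3 (- (of_int n ^ 2 * Y)) (- Y)"
    using odd_square_cong2[OF U(3) Y] by (rule cong2_uminus)
  finally have "cong2 3 (U * x ^ (2 * m) + Y) (- Y + Y)"
    by (rule cong2_add) simp
  then show ?thesis
    by simp
qed

lemma reduced_equation_mod8:
  assumes m: "odd m" and U: "pi_unit U" and V: "pi_unit V" and G: "pi_unit G"
    and VU: "cong2 2 (V * cnj U) (of_int r)"
  obtains x W where "pi_unit x" "W \<in> {0, 1}"
    "cong2 3 (U * x ^ (2 * m) + (V + unif ^ 4 * G * of_int W)) 0"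
proof -
  obtain n where n: "odd n" "U * cnj U = of_int n"
    using U by (rule pi_unit_norm)
  have "pi_unit (V * cnj U)"
    using U V by (simp add: pi_unit_mult pi_unit_cnj)
  then obtain p q where p: "odd p" "V * cnj U = emb (p, 4 * q)"
    using VU by (rule pi_unit_cong2_of_int_mod4)
  define g where "g = of_int (- n) * cnj U * G"
  have "pi_unit g"
    using n(1) U G unfolding g_def by (intro pi_unit_mult pi_unit_cnj) simp_all
  then obtain e where e: "e \<in> {(1, 0), (0, 1)}" "cong2 1 g (emb e)"
    by (rule pi_unit_cong2_basis)
  have "odd (- n * p)"
    using n(1) p(1) by simp
  then obtain x W where x: "pi_unit x" "W \<in> {0, 1}" "cong2 3 (x ^ 4) 1"
    "cong2 3 (x\<^sup>2) (emb (- n * p, 4 * (- n * q)) + of_int W * (4 * emb e))"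
    using e(1) by (rule unit_with_square_mod8)
  define Y where "Y = V + unif ^ 4 * G * of_int W"
  \<comment> \<open>The optional term 4 emb e is congruent to unif^4 g modulo 8; this turns x^2 into - n cnj U Y.\<close>
  note x(4)
  also have "emb (- n * p, 4 * (- n * q)) = - of_int n * (V * cnj U)"
    unfolding p(2) by (simp add: emb_def algebra_simps)
  also have "cong2 3 (- of_int n * (V * cnj U) + of_int W * (4 * emb e))
      (- of_int n * (V * cnj U) + of_int W * (unif ^ 4 * g))"
    using four_cong2_unif_power4[OF pi_unit_in_Zring[OF \<open>pi_unit g\<close>] e(2)]
    by (rule cong2_add[OF cong2_refl cong2_mult_left[OF of_int_in_Zring]])
  also have "- of_int n * (V * cnj U) + of_int W * (unif ^ 4 * g) = - of_int n * cnj U * Y"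
    unfolding g_def Y_def by (simp add: algebra_simps)
  finally have "cong2 3 (U * x ^ (2 * m) + Y) 0"
    using m U V G n x(1,3) by (intro root_mod8_from_square) (simp_all add: Y_def pi_unit_in_Zring)
  then show ?thesis
    using that[OF x(1,2)] by (simp add: Y_def)
qed

section \<open>Levels and the diagonal form\<close>

text \<open>The approximation with index 0 carries no information, everything being congruent modulo 2^0;
  hence the unit condition is only imposed from index 1 on.\<close>

definition O_unit :: "Oelt \<Rightarrow> bool" where
  "O_unit u \<longleftrightarrow> in_O u \<and> (\<forall>n\<ge>1. pi_unit (emb (u n)))"

definition unit_factorization :: "Oelt \<Rightarrow> nat \<Rightarrow> Oelt \<Rightarrow> bool" where
  "unit_factorization A r u \<longleftrightarrow> O_unit u \<and> (\<forall>n. cong2 n (emb (A n)) (unif ^ r * emb (u n)))"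

lemma level_coeff_unit_factorization:
  assumes "level_coeff D d A k c"
  obtains r u where "r mod d = k mod d" "unit_factorization A r u" "zcong 1 (u 3) (1 + c, c)"
proof -
  obtain r u w where u: "in_O u" "r mod d = k mod d"
    "O_eq A (O_mul D (O_pow D O_pi r) u)"
    "O_eq (O_sub u (O_add O_one (O_mul D (O_of (c, 0)) O_pi))) (O_mul D (O_pow D O_pi 2) w)"
    using assms unfolding level_coeff_def by blast
  have emb_pi: "emb (O_pi n) = unif" for n
    by (simp add: O_pi_def O_of_def unif_def emb_def)
  have residue: "cong2 1 (emb (u n)) (emb (1 + c, c))" if "n \<ge> 1" for n
  proof -
    have "cong2 n (emb (u n) - emb (1 + c, c)) (unif\<^sup>2 * emb (w n))"
      using u(4) by (simp add: O_eq_iff_cong2 emb_pi) (simp add: emb_def unif_def algebra_simps)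
    then have "cong2 1 (emb (u n) - emb (1 + c, c)) (unif\<^sup>2 * emb (w n))"
      using that cong2_mono by blast
    also have "cong2 1 (unif\<^sup>2 * emb (w n)) 0"
      unfolding cong2_def unif_squared_even
      by (intro bexI[of _ "emb ((1 - D) div 2, 1) * emb (w n)"]) simp_all
    finally show ?thesis
      by (subst cong2_iff_diff)
  qed
  have "O_unit u"
    unfolding O_unit_def using u(1) pi_unit_cong2[OF _ _ cong2_sym[OF residue]] by simp
  then have "unit_factorization A r u"
    using u(3) by (simp add: unit_factorization_def O_eq_iff_cong2 emb_pi)
  moreover have "zcong 1 (u 3) (1 + c, c)"
    using residue[of 3] by (simp add: zcong_iff_cong2)
  ultimately show ?thesis
    using that u(2) by blast
qed

lemma unit_factorization_exponent_unique:
  assumes "unit_factorization A r u" "unit_factorization A r' u'"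
  shows "r = r'"
proof -
  have "\<not> r1 < r2" if f1: "unit_factorization A r1 u1" and f2: "unit_factorization A r2 u2" for r1 r2 u1 u2
  proof
    assume "r1 < r2"
    have h1: "cong2 (r1 + 1) (emb (A (r1 + 1))) (unif ^ r1 * emb (u1 (r1 + 1)))"
      and h2: "cong2 (r1 + 1) (emb (A (r1 + 1))) (unif ^ r2 * emb (u2 (r1 + 1)))"
      and unit: "pi_unit (emb (u1 (r1 + 1)))"
      using f1 f2 unfolding unit_factorization_def O_unit_def by simp_all
    have "cong2 (r1 + 1) (unif ^ r1 * emb (u1 (r1 + 1))) (unif ^ r2 * emb (u2 (r1 + 1)))"
      using cong2_sym[OF h1] h2 by (rule cong2_trans)
    then show False
      using unif_power_unit_not_cong2[OF \<open>r1 < r2\<close> unit emb_in_Zring] by contradiction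
  qed
  then show ?thesis
    using assms by (meson linorder_neqE_nat)
qed

lemma unit_factorization_levels_distinct:
  assumes "d \<ge> 6" "unit_factorization (a i) r u" "unit_factorization (a i') r' u'"
    and "r mod d = k mod d" "r' mod d = (k + 4) mod d"
  shows "i \<noteq> i'"
proof
  assume "i = i'"
  then have "(k + 4) mod d = k mod d"
    using assms unit_factorization_exponent_unique by metis
  then have "d dvd 4"
    using mod_eq_dvd_iff_nat[of k "k + 4" d] by simp
  then show False
    using assms(1) by (auto dest: dvd_imp_le)
qed

lemma unit_factorization_scaled_term:
  assumes "unit_factorization A r u" "z \<in> Zring" "d * t + r = N + e"
  shows "cong2 n (emb (A n) * (unif ^ t * z) ^ d) (unif ^ N * (unif ^ e * emb (u n) * z ^ d))"
proof -
  have "(unif ^ t * z) ^ d = unif ^ (d * t) * z ^ d"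
    by (simp add: power_mult_distrib power_mult[symmetric] mult.commute[of d])
  moreover have "cong2 n (emb (A n) * (unif ^ (d * t) * z ^ d)) (unif ^ r * emb (u n) * (unif ^ (d * t) * z ^ d))"
    using assms unfolding unit_factorization_def by (simp add: cong2_mult_right)
  moreover have "unif ^ r * emb (u n) * (unif ^ (d * t) * z ^ d) = unif ^ N * (unif ^ e * emb (u n) * z ^ d)"
  proof -
    have "unif ^ r * emb (u n) * (unif ^ (d * t) * z ^ d) = (unif ^ r * unif ^ (d * t)) * (emb (u n) * z ^ d)"
      by (simp add: ac_simps)
    also have "unif ^ r * unif ^ (d * t) = unif ^ N * unif ^ e"
      using assms(3) by (simp add: add.commute flip: power_add)
    finally show ?thesis
      by (simp add: ac_simps)
  qed
  ultimately show ?thesis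
    by simp
qed

lemma level_coeff_pigeonhole:
  assumes "level_coeff D d (a i1) k c" "level_coeff D d (a i2) k c" "level_coeff D d (a i3) k c"
  obtains P Q rP uP rQ uQ where "(P, Q) \<in> {(i1, i2), (i1, i3), (i2, i3)}"
    "unit_factorization (a P) rP uP" "rP mod d = k mod d"
    "unit_factorization (a Q) rQ uQ" "rQ mod d = k mod d" "4 dvd det2 (uP 3) (uQ 3)"
proof -
  obtain r1 u1 where f1: "r1 mod d = k mod d" "unit_factorization (a i1) r1 u1" "zcong 1 (u1 3) (1 + c, c)"
    using assms(1) by (rule level_coeff_unit_factorization)
  obtain r2 u2 where f2: "r2 mod d = k mod d" "unit_factorization (a i2) r2 u2" "zcong 1 (u2 3) (1 + c, c)"
    using assms(2) by (rule level_coeff_unit_factorization)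
  obtain r3 u3 where f3: "r3 mod d = k mod d" "unit_factorization (a i3) r3 u3" "zcong 1 (u3 3) (1 + c, c)"
    using assms(3) by (rule level_coeff_unit_factorization)
  have "c \<in> {0, 1}"
    using assms(1) by (simp add: level_coeff_def)
  then consider "4 dvd det2 (u1 3) (u2 3)" | "4 dvd det2 (u1 3) (u3 3)" | "4 dvd det2 (u2 3) (u3 3)"
    using det2_mod4_pigeonhole f1(3) f2(3) f3(3) by blast
  then show ?thesis
  proof cases
    case 1
    then show ?thesis
      using that[OF _ f1(2,1) f2(2,1)] by simp
  next
    case 2
    then show ?thesis
      using that[OF _ f1(2,1) f3(2,1)] by simp
  next
    case 3
    then show ?thesis
      using that[OF _ f2(2,1) f3(2,1)] by simp
  qed
qed

lemma reduced_equation_solution: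
  assumes m: "odd m" and units: "O_unit uP" "O_unit uQ" "O_unit uj"
    and det: "4 dvd det2 (uP 3) (uQ 3)"
  obtains y W where "\<forall>n. pi_unit (y n)" "coherent y" "W \<in> {0, 1}"
    "\<forall>n. cong2 n (emb (uP n) * y n ^ (2 * m) + (emb (uQ n) + unif ^ 4 * emb (uj n) * of_int W)) 0"
proof -
  define U where "U n = emb (uP n)" for n
  define V where "V n = emb (uQ n)" for n
  define G where "G n = emb (uj n)" for n
  have "\<forall>n\<ge>1. pi_unit (U n)" "\<forall>n\<ge>1. pi_unit (V n)" "\<forall>n\<ge>1. pi_unit (G n)"
    and "coherent U" "coherent V" "coherent G"
    using units unfolding U_def[abs_def] V_def[abs_def] G_def[abs_def]
    by (simp_all add: O_unit_def in_O_iff_coherent)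
  note UVG = this
  have units3: "pi_unit (U 3)" "pi_unit (V 3)" "pi_unit (G 3)"
    using UVG by simp_all
  have "cong2 2 (V 3 * cnj (U 3)) (of_int (fst (uP 3) * fst (uQ 3) + D * snd (uP 3) * snd (uQ 3)))"
    unfolding U_def V_def using det by (rule emb_mult_cnj_cong2_of_int)
  then obtain y0 W where y0: "pi_unit y0" "W \<in> {0, 1}"
    "cong2 3 (U 3 * y0 ^ (2 * m) + (V 3 + unif ^ 4 * G 3 * of_int W)) 0"
    by (rule reduced_equation_mod8[OF m units3])
  define T where "T n = V n + unif ^ 4 * G n * of_int W" for n
  have "coherent T"
    unfolding T_def using UVG coherent_mult_left[of "unif ^ 4 * of_int W" G]
    by (simp add: coherent_add mult.commute mult.left_commute)
  moreover have "\<forall>n. T n \<in> Zring"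
    by (simp add: T_def V_def G_def)
  moreover have "cong2 3 (U 3 * y0 ^ (2 * m) + T 3) 0"
    using y0(3) by (simp add: T_def)
  ultimately obtain y where "\<forall>n. pi_unit (y n)" "coherent y" "\<forall>n. cong2 n (U n * y n ^ (2 * m) + T n) 0"
    using hensel_lift[OF m UVG(1,4) _ _ y0(1)] by metis
  then show ?thesis
    using that y0(2) by (simp add: U_def T_def V_def G_def)
qed

lemma scaled_terms_cong2:
  assumes fP: "unit_factorization AP rP uP" and fQ: "unit_factorization AQ rQ uQ"
    and fj: "unit_factorization Aj rj uj"
    and N: "d * tP + rP = N" "d * tQ + rQ = N" "d * tj + rj = N + 4"
    and "d > 0" "z \<in> Zring" "W \<in> {0, 1}"
    and root: "cong2 n (emb (uP n) * z ^ d + (emb (uQ n) + unif ^ 4 * emb (uj n) * of_int W)) 0"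
  shows "cong2 n (emb (AP n) * (unif ^ tP * z) ^ d + emb (AQ n) * (unif ^ tQ * 1) ^ d
    + emb (Aj n) * (unif ^ tj * of_int W) ^ d) 0"
proof -
  have "cong2 n (emb (AP n) * (unif ^ tP * z) ^ d + emb (AQ n) * (unif ^ tQ * 1) ^ d
      + emb (Aj n) * (unif ^ tj * of_int W) ^ d)
    (unif ^ N * (unif ^ 0 * emb (uP n) * z ^ d) + unif ^ N * (unif ^ 0 * emb (uQ n) * 1 ^ d)
      + unif ^ N * (unif ^ 4 * emb (uj n) * of_int W ^ d))"
    using assms by (intro cong2_add unit_factorization_scaled_term) simp_all
  also have "\<dots> = unif ^ N * (emb (uP n) * z ^ d + (emb (uQ n) + unif ^ 4 * emb (uj n) * of_int W))"
    using assms(7,9) by (auto simp: algebra_simps)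
  also have "cong2 n \<dots> (unif ^ N * 0)"
    using root by (intro cong2_mult_left) simp_all
  finally show ?thesis
    by simp
qed

lemma diag_form_zero_from_factorizations:
  assumes m: "odd m" "m \<ge> 3"
    and idx: "P < s" "Q < s" "P \<noteq> Q" "j < s"
    and fP: "unit_factorization (a P) rP uP" and fQ: "unit_factorization (a Q) rQ uQ"
    and fj: "unit_factorization (a j) rj uj"
    and levels: "rP mod (2 * m) = k mod (2 * m)" "rQ mod (2 * m) = k mod (2 * m)"
      "rj mod (2 * m) = (k + 4) mod (2 * m)"
    and det: "4 dvd det2 (uP 3) (uQ 3)"
  shows "\<exists>x. (\<forall>i<s. in_O (fst (x i))) \<and> (\<exists>i<s. \<not> O_eq (fst (x i)) O_zero) \<and>
    K_eq D (diag_form D (2 * m) a s x) K_zero"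
proof -
  have "2 * m \<ge> 6"
    using m(2) by simp
  then have "P \<noteq> j" "Q \<noteq> j"
    using unit_factorization_levels_distinct[OF _ fP fj levels(1,3)]
      unit_factorization_levels_distinct[OF _ fQ fj levels(2,3)] by simp_all
  have "2 * m > 0"
    using m(1) by (simp add: odd_pos)
  then obtain N tP tQ tj where N: "2 * m * tP + rP = N" "2 * m * tQ + rQ = N" "2 * m * tj + rj = N + 4"
    using exponents_align[OF _ levels] by metis
  have units: "O_unit uP" "O_unit uQ" "O_unit uj"
    using fP fQ fj by (simp_all add: unit_factorization_def)
  obtain y W where y: "\<forall>n. pi_unit (y n)" "coherent y" "W \<in> {0, 1}"
    "\<forall>n. cong2 n (emb (uP n) * y n ^ (2 * m) + (emb (uQ n) + unif ^ 4 * emb (uj n) * of_int W)) 0"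
    by (rule reduced_equation_solution[OF m(1) units det])
  \<comment> \<open>The scaling makes every term divisible by exactly unif ^ N, leaving the reduced equation.\<close>
  define X where "X i = (if i = P then (\<lambda>n. unif ^ tP * y n) else if i = Q then (\<lambda>n. unif ^ tQ * 1)
    else if i = j then (\<lambda>n. unif ^ tj * of_int W) else (\<lambda>n. 0))" for i
  show ?thesis
  proof (rule diag_form_zero_from_approximations)
    show "\<forall>i<s. (\<forall>n. X i n \<in> Zring) \<and> coherent (X i)"
      using y(1,2) by (simp add: X_def pi_unit_in_Zring coherent_mult_left)
    show "\<not> (\<forall>n. cong2 n (X P n) 0)"
      using unif_power_unit_not_cong2_zero[of "y (tP + 1)" tP] y(1) by (auto simp: X_def)
    show "\<forall>n. cong2 n (\<Sum>i<s. emb (a i n) * X i n ^ (2 * m)) 0"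
    proof
      fix n
      have "(\<Sum>i<s. emb (a i n) * X i n ^ (2 * m))
          = emb (a P n) * X P n ^ (2 * m) + emb (a Q n) * X Q n ^ (2 * m) + emb (a j n) * X j n ^ (2 * m)"
        using m(1) \<open>P \<noteq> j\<close> \<open>Q \<noteq> j\<close>
        by (intro sum_lessThan_three[OF idx(1,2,4,3)]) (auto simp: X_def odd_pos)
      then show "cong2 n (\<Sum>i<s. emb (a i n) * X i n ^ (2 * m)) 0"
        using scaled_terms_cong2[OF fP fQ fj N \<open>2 * m > 0\<close> _ y(3)] y(1,4) idx(3) \<open>P \<noteq> j\<close> \<open>Q \<noteq> j\<close>
        by (simp add: X_def pi_unit_in_Zring)
    qed
  qed (fact idx(1))
qed

end

theorem lemma7:
  fixes D :: int and m s k :: nat and a :: "nat \<Rightarrow> Oelt" and c :: int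
  assumes "D = 1 \<or> D = 5"
    and "odd m" and "m \<ge> 3"
    and "\<forall>i<s. in_O (a i) \<and> \<not> O_eq (a i) O_zero"
    and "\<exists>i1 i2 i3. i1 < s \<and> i2 < s \<and> i3 < s \<and> i1 \<noteq> i2 \<and> i1 \<noteq> i3 \<and> i2 \<noteq> i3 \<and>
           level_coeff D (2*m) (a i1) k c \<and> level_coeff D (2*m) (a i2) k c \<and>
           level_coeff D (2*m) (a i3) k c"
    and "\<exists>j<s. at_level D (2*m) (a j) (k + 4)"
  shows "\<exists>x :: nat \<Rightarrow> Kelt. (\<forall>i<s. in_O (fst (x i))) \<and> (\<exists>i<s. \<not> O_eq (fst (x i)) O_zero) \<and>
           K_eq D (diag_form D (2*m) a s x) K_zero"
proof -
  interpret dyadic_order D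
    using assms(1) by unfold_locales auto
  obtain i1 i2 i3 where idx: "i1 < s" "i2 < s" "i3 < s" "i1 \<noteq> i2" "i1 \<noteq> i3" "i2 \<noteq> i3"
    and lc: "level_coeff D (2 * m) (a i1) k c" "level_coeff D (2 * m) (a i2) k c"
      "level_coeff D (2 * m) (a i3) k c"
    using assms(5) by blast
  obtain P Q rP uP rQ uQ where PQ: "(P, Q) \<in> {(i1, i2), (i1, i3), (i2, i3)}"
    and fP: "unit_factorization (a P) rP uP" "rP mod (2 * m) = k mod (2 * m)"
    and fQ: "unit_factorization (a Q) rQ uQ" "rQ mod (2 * m) = k mod (2 * m)"
    and det: "4 dvd det2 (uP 3) (uQ 3)"
    by (rule level_coeff_pigeonhole[OF lc])
  obtain j c' where j: "j < s" "level_coeff D (2 * m) (a j) (k + 4) c'"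
    using assms(6) unfolding at_level_def by blast
  obtain rj uj where fj: "rj mod (2 * m) = (k + 4) mod (2 * m)" "unit_factorization (a j) rj uj"
    using level_coeff_unit_factorization[OF j(2)] by blast
  have "P < s" "Q < s" "P \<noteq> Q"
    using PQ idx by auto
  then show ?thesis
    using j(1) fP(2) fQ(2) fj(1) det
    by (rule diag_form_zero_from_factorizations[OF assms(2,3) _ _ _ _ fP(1) fQ(1) fj(2)])
qed

end
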